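(* Let $N_1,N_2,N_w,N_b,N$ and $T$ be as in the context, and let $\lambda_k=1-\frac{k(N-k+1)}{N_1N_2}$ for $k=0,\dots,N_w$. For each $k$ define $b^k=(b^k_0,\dots,b^k_{N_w})$ by $b^k_i=0$ for $i<k$ and $$b^k_i=(-1)^{i-k}\,\frac{(k-N_1)_{i-k}\,(k-N_w)_{i-k}}{(i-k)!\,(2k-N)_{i-k}},\qquad k\le i\le N_w$$ (all denominators are nonzero). Then $b^k$ satisfies, for all $i=0,\dots,N_w$ (with $b^k_{-1}:=0$), $$N_1N_2(\lambda_k-1)\,b^k_i=(N_1-i+1)(N_w-i+1)\,b^k_{i-1}-i\,(N_w-i+N_b+1)\,b^k_i,$$ and consequently the vector $c$ with $c_i=\sum_{j=i}^{N_w}(-1)^{j-i}\binom{j}{i}b^k_j$ is a nonzero right eigenvector of $T$ with eigenvalue $\lambda_k$. Equivalently, the polynomial $H^{(k)}(u,y,z)=\sum_{i=k}^{N_w}b^k_i\,u^iy^{N_1-i}z^{N_w-i}$ yields, via $G^{(k)}(x,y,z)=H^{(k)}(x-yz,y,z)=\sum_i c_i x^iy^{N_1-i}z^{N_w-i}$, the eigenvector coefficients $c_i$.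
   Context: Integers $N_1,N_2\ge1$, $N_w,N_b\ge0$ with $N_w+N_b=N_1+N_2=:N$, $N_w\le N_1$, $N_w\le N_2$. States $i\in\{0,\dots,N_w\}$. $p_i=\frac{(N_1-i)(N_w-i)}{N_1N_2}$, $q_i=\frac{i(N_b-N_1+i)}{N_1N_2}$, $r_i=1-p_i-q_i$. $T$ is the $(N_w+1)\times(N_w+1)$ matrix with $T_{i+1,i}=p_i$, $T_{i-1,i}=q_i$, $T_{ii}=r_i$, other entries $0$ (columns sum to 1). Right eigenvector: $Tc=\lambda c$. $(a)_n=a(a+1)\cdots(a+n-1)$, $(a)_0=1$. *)

theory Defs
  imports Complex_Main
begin

text \<open>Urn-model transition matrix. States are 0..Nw; the matrix T is represented
  as a function nat => nat => real, with T i j the entry in row i, column j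
  (only indices i, j \<le> Nw are meaningful).\<close>

definition pp :: "nat \<Rightarrow> nat \<Rightarrow> nat \<Rightarrow> nat \<Rightarrow> real" where
  "pp N1 N2 Nw i = (real N1 - real i) * (real Nw - real i) / (real N1 * real N2)"

definition qq :: "nat \<Rightarrow> nat \<Rightarrow> nat \<Rightarrow> nat \<Rightarrow> real" where
  "qq N1 N2 Nb i = real i * (real Nb - real N1 + real i) / (real N1 * real N2)"

definition rr :: "nat \<Rightarrow> nat \<Rightarrow> nat \<Rightarrow> nat \<Rightarrow> nat \<Rightarrow> real" where
  "rr N1 N2 Nw Nb i = 1 - pp N1 N2 Nw i - qq N1 N2 Nb i"

definition Tmat :: "nat \<Rightarrow> nat \<Rightarrow> nat \<Rightarrow> nat \<Rightarrow> nat \<Rightarrow> nat \<Rightarrow> real" where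
  "Tmat N1 N2 Nw Nb i j =
     (if i = j + 1 then pp N1 N2 Nw j
      else if j = i + 1 then qq N1 N2 Nb j
      else if i = j then rr N1 N2 Nw Nb j
      else 0)"

definition lam :: "nat \<Rightarrow> nat \<Rightarrow> nat \<Rightarrow> nat \<Rightarrow> real" where
  "lam N1 N2 N k = 1 - real k * (real N - real k + 1) / (real N1 * real N2)"

definition bvec :: "nat \<Rightarrow> nat \<Rightarrow> nat \<Rightarrow> nat \<Rightarrow> nat \<Rightarrow> real" where
  "bvec N1 Nw N k i =
     (if i < k then 0
      else (-1) ^ (i - k) * pochhammer (real k - real N1) (i - k)
             * pochhammer (real k - real Nw) (i - k)
           / (fact (i - k) * pochhammer (2 * real k - real N) (i - k)))"

definition cvec :: "nat \<Rightarrow> nat \<Rightarrow> nat \<Rightarrow> nat \<Rightarrow> nat \<Rightarrow> real" where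
  "cvec N1 Nw N k i = (\<Sum>j = i..Nw. (-1) ^ (j - i) * real (j choose i) * bvec N1 Nw N k j)"

end

theory Submission
  imports Defs
begin

text \<open>Write \<open>M\<close> for the matrix \<open>M i j = (-1)^(j-i) (j choose i)\<close>, so that \<open>c = M b\<close>;
  equivalently \<open>c\<close> lists the coefficients of \<open>B(x - 1)\<close> when \<open>b\<close> lists those of \<open>B(u)\<close>,
  which is the substitution \<open>u = x - y z\<close> of the last claim. Conjugating the tridiagonal
  matrix \<open>N1 N2 (T - \<lambda> I)\<close> by \<open>M\<close> gives a lower bidiagonal matrix, whose kernel equation is
  the two-term recurrence for \<open>b\<close>. That recurrence is solved by the hypergeometric
  coefficients \<open>b\<^sup>k\<close> for \<open>\<lambda> = \<lambda>\<^sub>k\<close>, and \<open>c\<^sub>N\<^sub>w = b\<^sub>N\<^sub>w \<noteq> 0\<close> since no Pochhammer factor vanishes.\<close>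

definition alt_binom :: "nat \<Rightarrow> nat \<Rightarrow> real" where
  "alt_binom i j = (if i \<le> j then (-1) ^ (j - i) * real (j choose i) else 0)"

lemma alt_binom_intertwining:
  fixes n1 nw nb :: real
  shows "(n1 - i + 1) * (nw - i + 1) * (if i = 0 then 0 else alt_binom (i - 1) j)
      - ((n1 - i) * (nw - i) + i * (nb - n1 + i)) * alt_binom i j
      + (i + 1) * (nb - n1 + i + 1) * alt_binom (i + 1) j
    = - (j * (nw + nb - j + 1)) * alt_binom i j + (n1 - j) * (nw - j) * alt_binom i (j + 1)"
proof (cases "i \<le> j")
  case False
  then show ?thesis by (cases "i = j + 1") (auto simp: alt_binom_def)
next
  case True
  then obtain d where j: "j = i + d" using le_iff_add by blast
  define A where "A = real ((i + d) choose i)"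
  define X where "X = (if i = 0 then 0 else real ((i + d) choose (i - 1)))"
  define Y where "Y = real ((i + d) choose (i + 1))"
  define Z where "Z = real ((i + d + 1) choose i)"
  define s :: real where "s = (-1) ^ d"
  have X: "(real d + 1) * X = real i * A"
  proof (cases i)
    case (Suc i')
    have "(d + 1) * ((i' + 1 + d) choose i') = (i' + 1) * ((i' + 1 + d) choose (i' + 1))"
      by (metis Suc_times_binomial_add Suc_eq_plus1 add.commute add_Suc_right)
    then show ?thesis
      unfolding X_def A_def Suc by (simp add: algebra_simps flip: of_nat_mult)
  qed (simp add: X_def)
  have "(i + 1) * ((i + d) choose (i + 1)) = d * ((i + d) choose i)"
    by (metis Suc_eq_plus1 binomial_absorb_comp binomial_absorption add.commute add_diff_cancel_right')
  then have Y: "(real i + 1) * Y = real d * A"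
    unfolding Y_def A_def by (simp add: algebra_simps flip: of_nat_mult)
  have "(d + 1) * ((i + d + 1) choose i) = (i + d + 1) * ((i + d) choose i)"
    by (metis Suc_times_binomial_add add.commute add_diff_cancel_right' binomial_absorption plus_1_eq_Suc)
  then have Z: "(real d + 1) * Z = (real i + real d + 1) * A"
    unfolding Z_def A_def by (simp add: algebra_simps flip: of_nat_mult)
  have prev: "(if i = 0 then 0 else alt_binom (i - 1) j) = - s * X"
    by (cases i) (auto simp: alt_binom_def X_def s_def j)
  have diag: "alt_binom i j = s * A" by (simp add: alt_binom_def A_def s_def j)
  have next_row: "alt_binom (i + 1) j = - s * Y"
    by (cases d) (auto simp: alt_binom_def Y_def s_def j)
  have next_col: "alt_binom i (j + 1) = - s * Z"
    by (simp add: alt_binom_def Z_def s_def j)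
  have "real j = real i + real d" "(1 / (real d + 1)) * (real d + 1) = 1"
    "(1 / (real i + 1)) * (real i + 1) = 1"
    by (simp_all add: j)
  then show ?thesis unfolding prev diag next_row next_col using X Y Z by algebra
qed

lemma alt_binom_monomial_sum:
  fixes x y z :: real
  assumes "j \<le> n" and "n \<le> m"
  shows "(\<Sum>i\<le>n. alt_binom i j * x ^ i * y ^ (m - i) * z ^ (n - i))
    = (x - y * z) ^ j * y ^ (m - j) * z ^ (n - j)"
proof -
  have "(\<Sum>i\<le>n. alt_binom i j * x ^ i * y ^ (m - i) * z ^ (n - i))
      = (\<Sum>i\<le>j. alt_binom i j * x ^ i * y ^ (m - i) * z ^ (n - i))"
    using assms(1) by (intro sum.mono_neutral_right) (auto simp: alt_binom_def)
  also have "\<dots> = (\<Sum>i\<le>j. real (j choose i) * x ^ i * (- (y * z)) ^ (j - i)) * y ^ (m - j) * z ^ (n - j)"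
    unfolding sum_distrib_right
  proof (rule sum.cong[OF refl])
    fix i assume "i \<in> {..j}"
    then have i: "i \<le> j" by simp
    have "y ^ (m - i) = y ^ (j - i) * y ^ (m - j)" "z ^ (n - i) = z ^ (j - i) * z ^ (n - j)"
      using i assms by (simp_all flip: power_add)
    moreover have "(- (y * z)) ^ (j - i) = (-1) ^ (j - i) * y ^ (j - i) * z ^ (j - i)"
      by (simp only: power_minus[of "y * z"] power_mult_distrib mult.assoc)
    ultimately show "alt_binom i j * x ^ i * y ^ (m - i) * z ^ (n - i)
        = real (j choose i) * x ^ i * (- (y * z)) ^ (j - i) * y ^ (m - j) * z ^ (n - j)"
      using i by (simp only: alt_binom_def if_True mult_ac)
  qed
  also have "\<dots> = (x - y * z) ^ j * y ^ (m - j) * z ^ (n - j)"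
    using binomial_ring[of x "- (y * z)" j] by simp
  finally show ?thesis .
qed

lemma alt_binom_transform_expansion:
  fixes b :: "nat \<Rightarrow> real" and x y z :: real
  assumes "n \<le> m"
  shows "(\<Sum>j\<le>n. b j * (x - y * z) ^ j * y ^ (m - j) * z ^ (n - j))
    = (\<Sum>i\<le>n. (\<Sum>j\<le>n. alt_binom i j * b j) * x ^ i * y ^ (m - i) * z ^ (n - i))"
proof -
  have "(\<Sum>i\<le>n. (\<Sum>j\<le>n. alt_binom i j * b j) * x ^ i * y ^ (m - i) * z ^ (n - i))
      = (\<Sum>i\<le>n. \<Sum>j\<le>n. b j * (alt_binom i j * x ^ i * y ^ (m - i) * z ^ (n - i)))"
    unfolding sum_distrib_right by (intro sum.cong refl) (simp add: mult_ac)
  also have "\<dots> = (\<Sum>j\<le>n. b j * (\<Sum>i\<le>n. alt_binom i j * x ^ i * y ^ (m - i) * z ^ (n - i)))"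
    unfolding sum_distrib_left by (rule sum.swap)
  also have "\<dots> = (\<Sum>j\<le>n. b j * (x - y * z) ^ j * y ^ (m - j) * z ^ (n - j))"
  proof (rule sum.cong[OF refl])
    fix j assume "j \<in> {..n}"
    then have "(\<Sum>i\<le>n. alt_binom i j * x ^ i * y ^ (m - i) * z ^ (n - i))
        = (x - y * z) ^ j * y ^ (m - j) * z ^ (n - j)"
      using assms by (intro alt_binom_monomial_sum) simp_all
    then show "b j * (\<Sum>i\<le>n. alt_binom i j * x ^ i * y ^ (m - i) * z ^ (n - i))
        = b j * (x - y * z) ^ j * y ^ (m - j) * z ^ (n - j)"
      by (simp only: mult.assoc)
  qed
  finally show ?thesis ..
qed

lemma Tmat_row_sum:
  assumes "i \<le> Nw" and "c (Suc Nw) = 0"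
  shows "(\<Sum>j\<le>Nw. Tmat N1 N2 Nw Nb i j * c j)
     = (if i = 0 then 0 else pp N1 N2 Nw (i - 1) * c (i - 1)) + rr N1 N2 Nw Nb i * c i
       + qq N1 N2 Nb (i + 1) * c (i + 1)"
proof -
  have "Tmat N1 N2 Nw Nb i j * c j =
      (if j = i - 1 then (if i = 0 then 0 else pp N1 N2 Nw (i - 1) * c (i - 1)) else 0)
      + (if j = i then rr N1 N2 Nw Nb i * c i else 0)
      + (if j = i + 1 then qq N1 N2 Nb (i + 1) * c (i + 1) else 0)" for j
    by (auto simp: Tmat_def)
  then show ?thesis
    using assms by (cases "i = Nw") (auto simp: sum.distrib)
qed

lemma scaled_Tmat_row_sum:
  assumes "N1 \<ge> 1" and "N2 \<ge> 1" and "i \<le> Nw" and "c (Suc Nw) = 0"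
  shows "real N1 * real N2 * (\<Sum>j\<le>Nw. Tmat N1 N2 Nw Nb i j * c j)
     = real N1 * real N2 * c i
       + (real N1 - i + 1) * (real Nw - i + 1) * (if i = 0 then 0 else c (i - 1))
       - ((real N1 - i) * (real Nw - i) + i * (real Nb - real N1 + i)) * c i
       + (i + 1) * (real Nb - real N1 + i + 1) * c (i + 1)"
  unfolding Tmat_row_sum[where c = c, OF assms(3,4)] using assms
  by (cases "i = 0") (simp_all add: pp_def qq_def rr_def of_nat_diff field_simps)

lemma eigenvector_of_recurrence:
  fixes b :: "nat \<Rightarrow> real" and L :: real
  assumes "N1 \<ge> 1" and "N2 \<ge> 1" and "i \<le> Nw"
    and recurrence: "\<And>l. l \<le> Nw \<Longrightarrow> L * b l =
      (real N1 - real l + 1) * (real Nw - real l + 1) * (if l = 0 then 0 else b (l - 1))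
      - real l * (real Nw - real l + real Nb + 1) * b l"
  defines "c \<equiv> \<lambda>i. \<Sum>l\<le>Nw. alt_binom i l * b l"
  shows "real N1 * real N2 * (\<Sum>j\<le>Nw. Tmat N1 N2 Nw Nb i j * c j)
    = (real N1 * real N2 + L) * c i"
proof -
  define a where "a = (real N1 - i + 1) * (real Nw - i + 1)"
  define u where "u = (real N1 - i) * (real Nw - i) + i * (real Nb - real N1 + i)"
  define t where "t = (real i + 1) * (real Nb - real N1 + i + 1)"
  define e where "e = (\<lambda>l::nat. (real N1 - l + 1) * (real Nw - l + 1))"
  define b' where "b' = (\<lambda>l. if l = 0 then 0 else b (l - 1))"
  define g where "g = (\<lambda>l. alt_binom i l * e l * b' l)"
  have prev: "(if i = 0 then 0 else c (i - 1))
      = (\<Sum>l\<le>Nw. (if i = 0 then 0 else alt_binom (i - 1) l) * b l)"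
    by (simp add: c_def)
  have "c (Suc Nw) = 0" by (simp add: c_def alt_binom_def)
  then have "real N1 * real N2 * (\<Sum>j\<le>Nw. Tmat N1 N2 Nw Nb i j * c j) - real N1 * real N2 * c i
     = a * (if i = 0 then 0 else c (i - 1)) - u * c i + t * c (i + 1)"
    using assms(1-3) by (simp add: scaled_Tmat_row_sum a_def u_def t_def)
  also have "\<dots> = (\<Sum>l\<le>Nw. (a * (if i = 0 then 0 else alt_binom (i - 1) l)
       - u * alt_binom i l + t * alt_binom (i + 1) l) * b l)"
    unfolding prev c_def
    by (simp add: sum_distrib_left sum.distrib sum_subtractf algebra_simps del: of_nat_Suc)
  also have "\<dots> = (\<Sum>l\<le>Nw. (- (l * (real Nw + real Nb - l + 1)) * alt_binom i l
       + (real N1 - l) * (real Nw - l) * alt_binom i (l + 1)) * b l)"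
    using alt_binom_intertwining[of "real N1" i "real Nw" _ "real Nb"]
    by (simp add: a_def u_def t_def)
  also have "\<dots> = (\<Sum>l\<le>Nw. alt_binom i l * (- (l * (real Nw + real Nb - l + 1)) * b l))
      + (\<Sum>l\<le>Nw. g (Suc l))"
    unfolding sum.distrib[symmetric] by (rule sum.cong) (simp_all add: g_def e_def b'_def algebra_simps)
  \<comment> \<open>no boundary terms: \<open>g 0 = 0\<close>, and the factor \<open>Nw - l + 1\<close> of \<open>e l\<close> kills \<open>g (Nw + 1)\<close>\<close>
  also have "(\<Sum>l\<le>Nw. g (Suc l)) = (\<Sum>l\<le>Nw. g l)"
    using sum.atMost_Suc_shift[of g Nw] by (simp add: g_def e_def b'_def)
  also have "(\<Sum>l\<le>Nw. alt_binom i l * (- (l * (real Nw + real Nb - l + 1)) * b l)) + (\<Sum>l\<le>Nw. g l)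
      = (\<Sum>l\<le>Nw. alt_binom i l * (L * b l))"
    unfolding g_def e_def b'_def
    by (simp add: recurrence sum.distrib[symmetric] algebra_simps)
  also have "\<dots> = L * c i"
    by (simp add: c_def sum_distrib_left mult_ac)
  finally show ?thesis by (simp add: algebra_simps)
qed

lemma pochhammer_of_nat_diff_neq_0:
  assumes "a \<le> b" and "m \<le> b - a"
  shows "pochhammer (real a - real b) m \<noteq> 0"
proof -
  have "real a - real b = - real (b - a)"
    using assms(1) by (simp add: of_nat_diff)
  then show ?thesis
    using pochhammer_of_nat_eq_0_lemma'[OF assms(2), where 'a = real] by metis
qed

lemma pochhammer_2k_minus_N_neq_0:
  assumes "k \<le> Nw" and "k + Nw \<le> N" and "i \<le> Nw"
  shows "pochhammer (2 * real k - real N) (i - k) \<noteq> 0"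
  using assms pochhammer_of_nat_diff_neq_0[of "2 * k" N "i - k"] by simp

lemma bvec_below: "i < k \<Longrightarrow> bvec N1 Nw N k i = 0"
  by (simp add: bvec_def)

lemma bvec_diag: "bvec N1 Nw N k k = 1"
  by (simp add: bvec_def)

lemma bvec_Suc:
  assumes "pochhammer (2 * real k - real N) (Suc n) \<noteq> 0"
  shows "(real n + 1) * (2 * real k - real N + real n) * bvec N1 Nw N k (k + Suc n)
    = - (real k - real N1 + real n) * (real k - real Nw + real n) * bvec N1 Nw N k (k + n)"
proof -
  define p1 where "p1 = pochhammer (real k - real N1) n"
  define p2 where "p2 = pochhammer (real k - real Nw) n"
  define p3 where "p3 = pochhammer (2 * real k - real N) n"
  have nz: "p3 \<noteq> 0" "2 * real k - real N + real n \<noteq> 0"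
    using assms by (auto simp: pochhammer_Suc p3_def)
  have Suc_n: "bvec N1 Nw N k (k + Suc n) = (-1) ^ Suc n * (p1 * (real k - real N1 + real n))
      * (p2 * (real k - real Nw + real n)) / (fact n * (real n + 1) * (p3 * (2 * real k - real N + real n)))"
    by (simp add: bvec_def p1_def p2_def p3_def pochhammer_Suc fact_Suc algebra_simps)
  have n: "bvec N1 Nw N k (k + n) = (-1) ^ n * p1 * p2 / (fact n * p3)"
    by (simp add: bvec_def p1_def p2_def p3_def)
  show ?thesis
    unfolding Suc_n n using nz by (simp add: divide_simps) (simp add: algebra_simps)
qed

lemma bvec_recurrence:
  assumes "Nw + Nb = N" and "k \<le> Nw" and "k + Nw \<le> N" and "i \<le> Nw"
  shows "- (real k * (real N - real k + 1)) * bvec N1 Nw N k i =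
      (real N1 - real i + 1) * (real Nw - real i + 1) * (if i = 0 then 0 else bvec N1 Nw N k (i - 1))
      - real i * (real Nw - real i + real Nb + 1) * bvec N1 Nw N k i"
proof -
  consider "i < k" | "i = k" | n where "i = k + Suc n"
    by (cases "k < i") (auto dest!: less_imp_Suc_add simp: linorder_not_less le_less)
  then show ?thesis
  proof cases
    case 1
    then show ?thesis by (simp add: bvec_below)
  next
    case 2
    then show ?thesis
      using assms(1) by (auto simp: bvec_below bvec_diag algebra_simps simp flip: of_nat_add)
  next
    case 3
    have "pochhammer (2 * real k - real N) (Suc n) \<noteq> 0"
      using pochhammer_2k_minus_N_neq_0[OF assms(2-4)] 3 by simp
    from bvec_Suc[OF this, of N1 Nw, unfolded 3[symmetric]]
    have "(real n + 1) * (2 * real k - real N + real n) * bvec N1 Nw N k i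
        = - (real k - real N1 + real n) * (real k - real Nw + real n) * bvec N1 Nw N k (k + n)" .
    moreover have "(if i = 0 then 0 else bvec N1 Nw N k (i - 1)) = bvec N1 Nw N k (k + n)"
      using 3 by simp
    moreover have "real N = real Nw + real Nb" "real i = real k + real n + 1"
      using assms(1) 3 by simp_all
    ultimately show ?thesis by algebra
  qed
qed

lemma cvec_eq_alt_binom_sum: "cvec N1 Nw N k i = (\<Sum>j\<le>Nw. alt_binom i j * bvec N1 Nw N k j)"
proof -
  have "(\<Sum>j\<le>Nw. alt_binom i j * bvec N1 Nw N k j) = (\<Sum>j = i..Nw. alt_binom i j * bvec N1 Nw N k j)"
    by (rule sum.mono_neutral_right) (auto simp: alt_binom_def)
  then show ?thesis
    unfolding cvec_def by (auto simp: alt_binom_def intro: sum.cong)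
qed

lemma cvec_last_neq_0:
  assumes "k \<le> Nw" and "Nw \<le> N1" and "k + Nw \<le> N"
  shows "cvec N1 Nw N k Nw \<noteq> 0"
  using assms pochhammer_of_nat_diff_neq_0[of k N1 "Nw - k"] pochhammer_of_nat_diff_neq_0[of k Nw "Nw - k"]
    pochhammer_2k_minus_N_neq_0[of k Nw N Nw]
  by (simp add: cvec_def bvec_def)

lemma bvec_expansion:
  fixes x y z :: real
  assumes "Nw \<le> N1"
  shows "(\<Sum>i = k..Nw. bvec N1 Nw N k i * (x - y * z) ^ i * y ^ (N1 - i) * z ^ (Nw - i))
    = (\<Sum>i\<le>Nw. cvec N1 Nw N k i * x ^ i * y ^ (N1 - i) * z ^ (Nw - i))"
proof -
  have "(\<Sum>i = k..Nw. bvec N1 Nw N k i * (x - y * z) ^ i * y ^ (N1 - i) * z ^ (Nw - i))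
      = (\<Sum>i\<le>Nw. bvec N1 Nw N k i * (x - y * z) ^ i * y ^ (N1 - i) * z ^ (Nw - i))"
    by (rule sum.mono_neutral_left) (auto simp: bvec_below)
  then show ?thesis
    unfolding alt_binom_transform_expansion[OF assms] cvec_eq_alt_binom_sum .
qed

theorem mainTheorem3:
  fixes N1 N2 Nw Nb N k :: nat
  assumes "N1 \<ge> 1" and "N2 \<ge> 1"
    and "Nw + Nb = N1 + N2" and "N = N1 + N2"
    and "Nw \<le> N1" and "Nw \<le> N2"
    and "k \<le> Nw"
  shows "(\<forall>i. k \<le> i \<and> i \<le> Nw \<longrightarrow> pochhammer (2 * real k - real N) (i - k) \<noteq> 0)
    \<and> (\<forall>i \<le> Nw.
         real N1 * real N2 * (lam N1 N2 N k - 1) * bvec N1 Nw N k i =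
           (real N1 - real i + 1) * (real Nw - real i + 1)
             * (if i = 0 then 0 else bvec N1 Nw N k (i - 1))
           - real i * (real Nw - real i + real Nb + 1) * bvec N1 Nw N k i)
    \<and> (\<forall>i \<le> Nw. (\<Sum>j\<le>Nw. Tmat N1 N2 Nw Nb i j * cvec N1 Nw N k j)
                  = lam N1 N2 N k * cvec N1 Nw N k i)
    \<and> (\<exists>i \<le> Nw. cvec N1 Nw N k i \<noteq> 0)
    \<and> (\<forall>x y z :: real.
         (\<Sum>i = k..Nw. bvec N1 Nw N k i * (x - y * z) ^ i * y ^ (N1 - i) * z ^ (Nw - i))
         = (\<Sum>i\<le>Nw. cvec N1 Nw N k i * x ^ i * y ^ (N1 - i) * z ^ (Nw - i)))"
proof -
  have N: "Nw + Nb = N" "k + Nw \<le> N"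
    using assms by linarith+
  have "real N1 * real N2 * (lam N1 N2 N k - 1) = - (real k * (real N - real k + 1))"
    using assms(1,2) by (simp add: lam_def field_simps)
  then have recurrence: "real N1 * real N2 * (lam N1 N2 N k - 1) * bvec N1 Nw N k i =
      (real N1 - real i + 1) * (real Nw - real i + 1) * (if i = 0 then 0 else bvec N1 Nw N k (i - 1))
      - real i * (real Nw - real i + real Nb + 1) * bvec N1 Nw N k i" if "i \<le> Nw" for i
    using bvec_recurrence[OF N(1) assms(7) N(2) that] by simp
  have eigenvector: "(\<Sum>j\<le>Nw. Tmat N1 N2 Nw Nb i j * cvec N1 Nw N k j)
      = lam N1 N2 N k * cvec N1 Nw N k i" if "i \<le> Nw" for i
  proof -
    have "real N1 * real N2 * (\<Sum>j\<le>Nw. Tmat N1 N2 Nw Nb i j * cvec N1 Nw N k j)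
        = real N1 * real N2 * (lam N1 N2 N k * cvec N1 Nw N k i)"
      using eigenvector_of_recurrence[OF assms(1,2) that recurrence]
      by (simp add: cvec_eq_alt_binom_sum algebra_simps)
    then show ?thesis using assms(1,2) by simp
  qed
  show ?thesis
    using pochhammer_2k_minus_N_neq_0[OF assms(7) N(2)] recurrence eigenvector
      cvec_last_neq_0[OF assms(7,5) N(2)] bvec_expansion[OF assms(5)]
    by blast
qed

end
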